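(* Let $T$ be a p-string of length $n$, let $v$ be a node of $\mathrm{PPH}(T)$, and let $a\in\Sigma\cup\{0,\ldots,n-1\}$. Suppose $\mathrm{rslink}(a,v)=u$, where $u$ is a node of $\mathrm{PPH}(T)$. Then for every p-string $X$ with $\mathrm{prev}(X)=u$, we have $\mathrm{prev}(X[2..|X|])=v$.
   Context: Let $\Sigma$ and $\Pi$ be disjoint alphabets. A p-string is a finite string over $\Sigma\cup\Pi$. For a string $S$, $S[i]$ is its $i$-th character, $S[i..j]$ is the substring from position $i$ to $j$ (empty if $j<i$), and $S[i..]=S[i..|S|]$. The previous encoding $\mathrm{prev}(S)$ of a p-string $S$ of length $n$ is the sequence of length $n$ defined by: - $\mathrm{prev}(S)[i]=S[i]$ if $S[i]\in\Sigma$; - $\mathrm{prev}(S)[i]=0$ if $S[i]\in\Pi$ does not occur in $S[1..i-1]$; - $\mathrm{prev}(S)[i]=i-j$ otherwise, where $j<i$ is the largest position with $S[j]=S[i]$. Sequence hash tree. Let $\langle S_1,\ldots,S_k\rangle$ be a sequence of strings with $S_1=\varepsilon$ and with $S_i$ not a prefix of $S_j$ for any $j<i$. Its sequence hash tree is built as follows. Start from a root representing $\varepsilon$. For $i=2,\ldots,k$, insert as a new node the shortest prefix $p_i$ of $S_i$ that is not yet a node. Attach it as a child of the longest prefix $q_i$ of $S_i$ that is already a node, via an edge labeled $S_i[|q_i|+1]$. The parameterized position heap $\mathrm{PPH}(T)$ is the sequence hash tree of $\langle\varepsilon,\mathrm{prev}(T[n..]),\ldots,\mathrm{prev}(T[1..])\rangle$.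 Each node is identified with the string of edge labels on the path from the root to it, and $|v|$ denotes its length (the node depth). A string is represented by $\mathrm{PPH}(T)$ if it is spelled by a path from the root. Reversed suffix links. For a node $v$ and $a\in\Sigma\cup\{0,\ldots,n-1\}$, $\mathrm{rslink}(a,v)$ is defined as follows: - if $a\in\Sigma\cup\{0\}$ and $av$ is represented by $\mathrm{PPH}(T)$, then $\mathrm{rslink}(a,v)=av$; - if $a\in\{1,\ldots,n-1\}$, $v[a]=0$, and $u=0\,v[1..a-1]\,a\,v[a+1..|v|]$ is represented by $\mathrm{PPH}(T)$, then $\mathrm{rslink}(a,v)=u$; - otherwise $\mathrm{rslink}(a,v)$ is undefined. *)

theory Defs
  imports Main
begin

text \<open>A p-string over disjoint alphabets Sigma (type 's) and Pi (type 'p) is a list of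
  ('s + 'p): Inl c is a static character c in Sigma, Inr x a parameter character x in Pi.
  Entries of the prev encoding are of type ('s + nat): Inl c for c in Sigma, Inr k for the
  number k. Positions in Isabelle lists are 0-based; the paper's S[i] is S ! (i - 1).\<close>

definition prev :: "('s + 'p) list \<Rightarrow> ('s + nat) list" where
  "prev S = map (\<lambda>i. case S ! i of
        Inl c \<Rightarrow> Inl c
      | Inr x \<Rightarrow> (if Inr x \<notin> set (take i S) then Inr 0
                  else Inr (i - (GREATEST j. j < i \<and> S ! j = Inr x))))
     [0..<length S]"

text \<open>One insertion step of a sequence hash tree: nodes are identified with the strings
  spelled from the root; the shortest prefix of S that is not yet a node is added
  (it is attached to the longest prefix that is a node, i.e. its parent prefix).\<close>

definition sht_insert :: "'a list set \<Rightarrow> 'a list \<Rightarrow> 'a list set" where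
  "sht_insert N S =
     (if \<exists>k\<le>length S. take k S \<notin> N
      then insert (take (LEAST k. take k S \<notin> N) S) N
      else N)"

text \<open>Node set of the sequence hash tree of the sequence S1, S2, ..., Sk (S1 = empty).\<close>

definition sht_nodes :: "'a list list \<Rightarrow> 'a list set" where
  "sht_nodes Ss = foldl sht_insert {[]} (tl Ss)"

text \<open>PPH(T): sequence hash tree of (empty, prev(T[n..]), ..., prev(T[1..])).
  drop i T is T[i+1..].\<close>

definition PPH :: "('s + 'p) list \<Rightarrow> ('s + nat) list set" where
  "PPH T = sht_nodes ([] # map (\<lambda>i. prev (drop i T)) (rev [0..<length T]))"

text \<open>A string is represented by PPH(T) iff it is spelled by a path from the root;
  since every edge carries one symbol, these are exactly the node strings.\<close>

definition represented :: "('s + 'p) list \<Rightarrow> ('s + nat) list \<Rightarrow> bool" where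
  "represented T w \<longleftrightarrow> w \<in> PPH T"

definition rslink :: "('s + 'p) list \<Rightarrow> ('s + nat) \<Rightarrow> ('s + nat) list \<Rightarrow> ('s + nat) list option" where
  "rslink T a v =
     (case a of
        Inl c \<Rightarrow> (if represented T (a # v) then Some (a # v) else None)
      | Inr k \<Rightarrow>
          (if k = 0 then (if represented T (a # v) then Some (a # v) else None)
           else if k \<le> length T - 1 \<and> k \<le> length v \<and> v ! (k - 1) = Inr 0
                   \<and> represented T (Inr 0 # take (k - 1) v @ [Inr k] @ drop k v)
           then Some (Inr 0 # take (k - 1) v @ [Inr k] @ drop k v)
           else None))"

end

theory Submission
  imports Defs
begin

text \<open>Deleting the head of a p-string changes the tail of its prev encoding in at most one
  entry: the next occurrence of the head's parameter pointed back to the head and becomes 0.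
  Since entries of an encoding never point before the start of the string, a node \<open>v\<close> of
  the heap has no entry of that shape, while \<open>rslink\<close> creates exactly one, at position \<open>a\<close>,
  out of a 0. Deleting the head of \<open>X\<close> with \<open>prev X = rslink(a, v)\<close> therefore undoes the
  link and returns \<open>v\<close>.\<close>

lemma length_prev [simp]: "length (prev S) = length S"
  unfolding prev_def by simp

lemma nth_prev:
  assumes "i < length S"
  shows "prev S ! i = (case S ! i of
        Inl c \<Rightarrow> Inl c
      | Inr x \<Rightarrow> (if Inr x \<notin> set (take i S) then Inr 0
                  else Inr (i - (GREATEST j. j < i \<and> S ! j = Inr x))))"
  using assms unfolding prev_def by (simp split: sum.split)

definition distances_bounded :: "('s + nat) list \<Rightarrow> bool" where
  "distances_bounded w \<longleftrightarrow> (\<forall>i<length w. \<forall>k. w ! i = Inr k \<longrightarrow> k \<le> i)"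

lemma distances_bounded_prev: "distances_bounded (prev S)"
  unfolding distances_bounded_def by (auto simp: nth_prev split: sum.splits if_splits)

lemma distances_bounded_take: "distances_bounded w \<Longrightarrow> distances_bounded (take k w)"
  unfolding distances_bounded_def by auto

lemma Greatest_Cons_nth:
  assumes "\<exists>j<i. X ! j = y"
  shows "(GREATEST j. j < Suc i \<and> (x # X) ! j = y) = Suc (GREATEST j. j < i \<and> X ! j = y)"
proof -
  let ?g = "GREATEST j. j < i \<and> X ! j = y"
  have g: "?g < i \<and> X ! ?g = y"
    using assms by (metis (mono_tags, lifting) GreatestI_nat less_imp_le)
  have above: "j \<le> ?g" if "j < i" "X ! j = y" for j
    using that by (metis (mono_tags, lifting) Greatest_le_nat less_imp_le)
  show ?thesis
  proof (rule Greatest_equality)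
    fix j assume "j < Suc i \<and> (x # X) ! j = y"
    then show "j \<le> Suc ?g" using above by (cases j) auto
  qed (use g in simp)
qed

lemma nth_prev_Cons_Suc:
  assumes i: "i < length X"
  shows "prev (x # X) ! Suc i =
    (if x \<in> range Inr \<and> X ! i = x \<and> x \<notin> set (take i X) then Inr (Suc i) else prev X ! i)"
proof (cases "X ! i")
  case (Inl c)
  then show ?thesis using i by (auto simp: nth_prev)
next
  case (Inr z)
  consider (earlier) "Inr z \<in> set (take i X)"
    | (head) "Inr z \<notin> set (take i X)" "x = Inr z"
    | (fresh) "Inr z \<notin> set (take i X)" "x \<noteq> Inr z"
    by blast
  then show ?thesis
  proof cases
    case earlier
    then have "\<exists>j<i. X ! j = Inr z" using i by (auto simp: in_set_conv_nth)
    then show ?thesis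
      using i Inr earlier by (auto simp: nth_prev Greatest_Cons_nth)
  next
    case head
    have "(GREATEST j. j < Suc i \<and> (x # X) ! j = Inr z) = 0"
      by (rule Greatest_equality)
        (use head i in \<open>auto simp: in_set_conv_nth less_Suc_eq_0_disj\<close>)
    then show ?thesis using i Inr head by (simp add: nth_prev)
  next
    case fresh
    then show ?thesis using i Inr by (simp add: nth_prev)
  qed
qed

text \<open>In \<open>tl (prev X)\<close>, the entry at index \<open>i\<close> is \<open>Inr (Suc i)\<close> exactly when it points back
  to the head of \<open>X\<close>.\<close>

definition drop_head_refs :: "('s + nat) list \<Rightarrow> ('s + nat) list" where
  "drop_head_refs w = map (\<lambda>i. if w ! i = Inr (Suc i) then Inr 0 else w ! i) [0..<length w]"

lemma prev_tl: "prev (tl X) = drop_head_refs (tl (prev X))"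
proof (cases X)
  case Nil
  then show ?thesis by (simp add: prev_def drop_head_refs_def)
next
  case (Cons x X')
  have "prev X' ! i = (if prev (x # X') ! Suc i = Inr (Suc i) then Inr 0 else prev (x # X') ! Suc i)"
    if i: "i < length X'" for i
  proof (cases "x \<in> range Inr \<and> X' ! i = x \<and> x \<notin> set (take i X')")
    case True
    then have "prev X' ! i = Inr 0" using i by (auto simp: nth_prev)
    then show ?thesis using True i by (simp add: nth_prev_Cons_Suc)
  next
    case False
    then have "prev (x # X') ! Suc i = prev X' ! i"
      using nth_prev_Cons_Suc[OF i, of x] by argo
    moreover have "prev X' ! i \<noteq> Inr (Suc i)"
      using distances_bounded_prev[of X'] i unfolding distances_bounded_def by fastforce
    ultimately show ?thesis by simp
  qed
  then show ?thesis
    using Cons by (intro nth_equalityI) (simp_all add: drop_head_refs_def nth_tl)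
qed

lemma drop_head_refs_id: "distances_bounded w \<Longrightarrow> drop_head_refs w = w"
  unfolding distances_bounded_def drop_head_refs_def
  by (intro nth_equalityI) fastforce+

lemma drop_head_refs_update_zero:
  assumes "i < length w" "w ! i = Inr 0"
  shows "drop_head_refs (w[i := Inr (Suc i)]) = drop_head_refs w"
  using assms unfolding drop_head_refs_def by (intro nth_equalityI) (auto simp: nth_list_update)

lemma sht_insert_subset: "sht_insert N S \<subseteq> insert (take (LEAST k. take k S \<notin> N) S) N"
  unfolding sht_insert_def by auto

lemma foldl_sht_insert_subset:
  "foldl sht_insert N Ss \<subseteq> N \<union> (\<Union>S\<in>set Ss. range (\<lambda>k. take k S))"
proof (induction Ss arbitrary: N)
  case (Cons S Ss)
  have "foldl sht_insert N (S # Ss) \<subseteq> sht_insert N S \<union> (\<Union>S\<in>set Ss. range (\<lambda>k. take k S))"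
    using Cons.IH by simp
  also have "\<dots> \<subseteq> N \<union> (\<Union>S'\<in>set (S # Ss). range (\<lambda>k. take k S'))"
    using sht_insert_subset[of N S] by auto
  finally show ?case .
qed simp

lemma PPH_node_prefix_prev:
  fixes T :: "('s + 'p) list"
  assumes "w \<in> PPH T"
  shows "\<exists>S :: ('s + 'p) list. \<exists>k. w = take k (prev S)"
proof -
  have "w = [] \<or> (\<exists>i k. w = take k (prev (drop i T)))"
    using subsetD[OF foldl_sht_insert_subset assms[unfolded PPH_def sht_nodes_def list.sel]]
    by auto
  then show ?thesis by (metis take_0)
qed

lemma distances_bounded_PPH: "w \<in> PPH T \<Longrightarrow> distances_bounded w"
  using PPH_node_prefix_prev distances_bounded_prev distances_bounded_take by metis

theorem lemma3:
  fixes T :: "('s + 'p) list" and a :: "'s + nat" and u v :: "('s + nat) list"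
  assumes "v \<in> PPH T"
    and "a \<in> range Inl \<union> Inr ` {0..<length T}"
    and "rslink T a v = Some u"
    and "u \<in> PPH T"
  shows "\<forall>X :: ('s + 'p) list. prev X = u \<longrightarrow> prev (drop 1 X) = v"
proof (intro allI impI)
  fix X :: "('s + 'p) list"
  assume "prev X = u"
  then have "prev (drop 1 X) = drop_head_refs (tl u)"
    by (simp add: prev_tl drop_Suc)
  also have "drop_head_refs (tl u) = drop_head_refs v"
  proof (cases "a \<in> range Inl \<or> a = Inr 0")
    case True
    then have "u = a # v" using assms(3) by (auto simp: rslink_def split: if_splits)
    then show ?thesis by simp
  next
    case False
    then obtain k where "a = Inr (Suc k)" by (cases a) (auto simp: gr0_conv_Suc)
    then have "k < length v" "v ! k = Inr 0" "tl u = v[k := Inr (Suc k)]"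
      using assms(3) by (auto simp: rslink_def upd_conv_take_nth_drop split: if_splits)
    then show ?thesis by (simp add: drop_head_refs_update_zero)
  qed
  also have "\<dots> = v"
    using assms(1) by (simp add: distances_bounded_PPH drop_head_refs_id)
  finally show "prev (drop 1 X) = v" .
qed

end
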